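(* Let $n\ge 0$ be an even integer and $p\in\Gamma_n$. Then $\mathrm{Sub}(p)=\{\sigma_{n-1}(p),\pi_{n-1}(p)\}$; that is, the only occurrences of $(n-1)$-ambiguities in $p$ are the suffix $\sigma_{n-1}(p)$ and the prefix $\pi_{n-1}(p)$ (and these two are distinct).
   Context: Let $\Bbbk$ be a field, $Q=(Q_0,Q_1,s,t)$ a finite quiver, and $A=\Bbbk Q/I$ a finite-dimensional monomial algebra, i.e. $I$ is an ideal generated by paths of length at least $2$. Paths are written from right to left: a path is $p=\alpha_n\cdots\alpha_1$ with arrows $\alpha_i$ and $t(\alpha_i)=s(\alpha_{i+1})$; vertices are the paths of length $0$ (trivial paths, also denoted $1$); $qp$ denotes concatenation when $t(p)=s(q)$. Let $\mathcal B$ be the set of paths not lying in $I$. If $p=bqa$ for paths $a,b,q$, then $q$ is a divisor of $p$; we write $q\le p$ to mean that $q$ is a divisor of $p$ at a fixed position (an occurrence), and then $\mathrm{pre}_p(q):=a$, $\mathrm{suf}_p(q):=b$. If $b$ is trivial, $q$ is a suffix; if $a$ is trivial, $q$ is a prefix; proper means $q\neq p$, written $q\lneq p$. For $n\ge -1$, a left $n$-ambiguity is a path $p$ with a decomposition $p=u_{-1}u_0u_1\cdots u_n$ such that $u_{-1}\in Q_0$, $u_0\in Q_1$, $u_i\in\mathcal B$ for all $i$, and for every $0\le i\le n-1$, $u_iu_{i+1}\in I$ while no proper suffix of $u_iu_{i+1}$ lies in $I$ (one writes $p=u_0\cdots u_n$). A right $n$-ambiguity is a path with a decomposition $p=v_n\cdots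 v_0v_{-1}$ with $v_{-1}\in Q_0$, $v_0\in Q_1$, $v_i\in\mathcal B$, and for $0\le i\le n-1$, $v_{i+1}v_i\in I$ while no proper prefix of $v_{i+1}v_i$ lies in $I$. A path is a left $n$-ambiguity iff it is a right $n$-ambiguity; such paths are called $n$-ambiguities, and $\Gamma_n$ denotes their set. Both decompositions of an $n$-ambiguity are unique. For $p\in\Gamma_n$ with left decomposition $u_0\cdots u_n$ and right decomposition $v_n\cdots v_0$, and $-1\le m\le n$, set $\sigma_m(p):=u_0\cdots u_m$ (a suffix of $p$ which is an $m$-ambiguity) and $\pi_m(p):=v_m\cdots v_0$ (a prefix of $p$ which is an $m$-ambiguity). For $p\in\Gamma_n$, $\mathrm{Sub}(p):=\{q\in\Gamma_{n-1}: q\le p\}$ is the set of occurrences of $(n-1)$-ambiguities in $p$. *)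

theory Defs
  imports Main
begin

record ('v, 'a) quiver =
  verts :: "'v set"
  arrs  :: "'a set"
  srcA  :: "'a \<Rightarrow> 'v"
  tgtA  :: "'a \<Rightarrow> 'v"

text \<open>A path is a pair (w, v): w is the list of arrows in WRITTEN order
  (paths are written right to left, so hd w is the last arrow traversed and
  last w the first one), and v is the source vertex s(p) of the path.
  The trivial path at a vertex v is ([], v).\<close>

type_synonym ('a, 'v) qpath = "'a list \<times> 'v"

definition plen :: "('a, 'v) qpath \<Rightarrow> nat" where
  "plen p = length (fst p)"

definition psrc :: "('a, 'v) qpath \<Rightarrow> 'v" where
  "psrc p = snd p"

definition ptgt :: "('v, 'a, 'b) quiver_scheme \<Rightarrow> ('a, 'v) qpath \<Rightarrow> 'v" where
  "ptgt Q p = (if fst p = [] then snd p else tgtA Q (hd (fst p)))"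

definition is_path :: "('v, 'a, 'b) quiver_scheme \<Rightarrow> ('a, 'v) qpath \<Rightarrow> bool" where
  "is_path Q p \<longleftrightarrow> snd p \<in> verts Q \<and> set (fst p) \<subseteq> arrs Q
     \<and> (fst p \<noteq> [] \<longrightarrow> srcA Q (last (fst p)) = snd p)
     \<and> (\<forall>i. Suc i < length (fst p) \<longrightarrow> srcA Q (fst p ! i) = tgtA Q (fst p ! Suc i))"

definition finite_quiver :: "('v, 'a, 'b) quiver_scheme \<Rightarrow> bool" where
  "finite_quiver Q \<longleftrightarrow> finite (verts Q) \<and> finite (arrs Q)
     \<and> (\<forall>a\<in>arrs Q. srcA Q a \<in> verts Q \<and> tgtA Q a \<in> verts Q)"

text \<open>Concatenation qp (p first, then q), meaningful when t(p) = s(q).\<close>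
definition pcat :: "('a, 'v) qpath \<Rightarrow> ('a, 'v) qpath \<Rightarrow> ('a, 'v) qpath" where
  "pcat q p = (fst q @ fst p, snd p)"

text \<open>Vertex of p at position k (k = 0: target of p, k = plen p: source of p).\<close>
definition vertex_at :: "('v, 'a, 'b) quiver_scheme \<Rightarrow> ('a, 'v) qpath \<Rightarrow> nat \<Rightarrow> 'v" where
  "vertex_at Q p k = (if k < plen p then tgtA Q (fst p ! k) else snd p)"

text \<open>Occurrence of q as a divisor of p at (written) offset i, i.e. p = b q a
  with plen b = i.  Offset 0 means q is a suffix (b trivial); offset
  plen p - plen q means q is a prefix (a trivial).\<close>
definition occ_at :: "('v, 'a, 'b) quiver_scheme \<Rightarrow> ('a, 'v) qpath \<Rightarrow> nat \<Rightarrow> ('a, 'v) qpath \<Rightarrow> bool" where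
  "occ_at Q q i p \<longleftrightarrow> is_path Q q \<and> is_path Q p \<and> i + plen q \<le> plen p
     \<and> fst q = take (plen q) (drop i (fst p))
     \<and> snd q = vertex_at Q p (i + plen q)"

definition is_suffix :: "('v, 'a, 'b) quiver_scheme \<Rightarrow> ('a, 'v) qpath \<Rightarrow> ('a, 'v) qpath \<Rightarrow> bool" where
  "is_suffix Q q p \<longleftrightarrow> occ_at Q q 0 p"

definition is_prefix :: "('v, 'a, 'b) quiver_scheme \<Rightarrow> ('a, 'v) qpath \<Rightarrow> ('a, 'v) qpath \<Rightarrow> bool" where
  "is_prefix Q q p \<longleftrightarrow> occ_at Q q (plen p - plen q) p"

definition inI :: "('v, 'a, 'b) quiver_scheme \<Rightarrow> ('a, 'v) qpath set \<Rightarrow> ('a, 'v) qpath \<Rightarrow> bool" where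
  "inI Q R p \<longleftrightarrow> is_path Q p \<and> (\<exists>r\<in>R. \<exists>i. occ_at Q r i p)"

definition Bset :: "('v, 'a, 'b) quiver_scheme \<Rightarrow> ('a, 'v) qpath set \<Rightarrow> ('a, 'v) qpath set" where
  "Bset Q R = {p. is_path Q p \<and> \<not> inI Q R p}"

text \<open>Standing hypotheses: finite quiver, ideal generated by paths of length
  \<ge> 2, and A = kQ/I finite dimensional (i.e. the basis B is finite).\<close>
definition monomial_setting :: "('v, 'a, 'b) quiver_scheme \<Rightarrow> ('a, 'v) qpath set \<Rightarrow> bool" where
  "monomial_setting Q R \<longleftrightarrow> finite_quiver Q
     \<and> (\<forall>r\<in>R. is_path Q r \<and> plen r \<ge> 2) \<and> finite (Bset Q R)"

text \<open>Product of a composable list of paths [x_1, ..., x_k] = x_1 x_2 ... x_k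
  (written order; x_k traversed first).\<close>
definition composable :: "('v, 'a, 'b) quiver_scheme \<Rightarrow> ('a, 'v) qpath list \<Rightarrow> bool" where
  "composable Q xs \<longleftrightarrow> xs \<noteq> [] \<and> (\<forall>x\<in>set xs. is_path Q x)
     \<and> (\<forall>i. Suc i < length xs \<longrightarrow> ptgt Q (xs ! Suc i) = psrc (xs ! i))"

definition pprod :: "('a, 'v) qpath list \<Rightarrow> ('a, 'v) qpath" where
  "pprod xs = (concat (map fst xs), snd (last xs))"

text \<open>Left n-ambiguity decomposition p = u_{-1} u_0 ... u_n, n \<ge> -1,
  encoded as a list us with us ! k = u_{k-1}.\<close>
definition left_decomp :: "('v, 'a, 'b) quiver_scheme \<Rightarrow> ('a, 'v) qpath set \<Rightarrow> int
    \<Rightarrow> ('a, 'v) qpath \<Rightarrow> ('a, 'v) qpath list \<Rightarrow> bool" where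
  "left_decomp Q R n p us \<longleftrightarrow> n \<ge> -1 \<and> int (length us) = n + 2
     \<and> composable Q us \<and> p = pprod us
     \<and> plen (us ! 0) = 0
     \<and> (length us \<ge> 2 \<longrightarrow> plen (us ! 1) = 1)
     \<and> (\<forall>x\<in>set us. x \<in> Bset Q R)
     \<and> (\<forall>k. 1 \<le> k \<and> Suc k < length us \<longrightarrow>
          inI Q R (pcat (us ! k) (us ! Suc k))
          \<and> (\<forall>q. is_suffix Q q (pcat (us ! k) (us ! Suc k))
                 \<and> q \<noteq> pcat (us ! k) (us ! Suc k) \<longrightarrow> \<not> inI Q R q))"

text \<open>Right n-ambiguity decomposition p = v_n ... v_0 v_{-1},
  encoded as a list vs with vs ! k = v_{k-1}, so p = pprod (rev vs).\<close>
definition right_decomp :: "('v, 'a, 'b) quiver_scheme \<Rightarrow> ('a, 'v) qpath set \<Rightarrow> int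
    \<Rightarrow> ('a, 'v) qpath \<Rightarrow> ('a, 'v) qpath list \<Rightarrow> bool" where
  "right_decomp Q R n p vs \<longleftrightarrow> n \<ge> -1 \<and> int (length vs) = n + 2
     \<and> composable Q (rev vs) \<and> p = pprod (rev vs)
     \<and> plen (vs ! 0) = 0
     \<and> (length vs \<ge> 2 \<longrightarrow> plen (vs ! 1) = 1)
     \<and> (\<forall>x\<in>set vs. x \<in> Bset Q R)
     \<and> (\<forall>k. 1 \<le> k \<and> Suc k < length vs \<longrightarrow>
          inI Q R (pcat (vs ! Suc k) (vs ! k))
          \<and> (\<forall>q. is_prefix Q q (pcat (vs ! Suc k) (vs ! k))
                 \<and> q \<noteq> pcat (vs ! Suc k) (vs ! k) \<longrightarrow> \<not> inI Q R q))"

definition Gamma :: "('v, 'a, 'b) quiver_scheme \<Rightarrow> ('a, 'v) qpath set \<Rightarrow> int \<Rightarrow> ('a, 'v) qpath set" where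
  "Gamma Q R n = {p. \<exists>us. left_decomp Q R n p us}"

text \<open>sigma_m(p) = u_{-1} u_0 ... u_m and pi_m(p) = v_m ... v_0 v_{-1}, using the
  (unique) left resp. right decomposition of p \<in> Gamma_n.\<close>
definition sigma :: "('v, 'a, 'b) quiver_scheme \<Rightarrow> ('a, 'v) qpath set \<Rightarrow> int \<Rightarrow> int
    \<Rightarrow> ('a, 'v) qpath \<Rightarrow> ('a, 'v) qpath" where
  "sigma Q R n m p = pprod (take (nat (m + 2)) (THE us. left_decomp Q R n p us))"

definition pi :: "('v, 'a, 'b) quiver_scheme \<Rightarrow> ('a, 'v) qpath set \<Rightarrow> int \<Rightarrow> int
    \<Rightarrow> ('a, 'v) qpath \<Rightarrow> ('a, 'v) qpath" where
  "pi Q R n m p = pprod (rev (take (nat (m + 2)) (THE vs. right_decomp Q R n p vs)))"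

text \<open>Sub(p) for p \<in> Gamma_n: the occurrences (q, offset) of (n-1)-ambiguities in p.\<close>
definition Sub :: "('v, 'a, 'b) quiver_scheme \<Rightarrow> ('a, 'v) qpath set \<Rightarrow> int
    \<Rightarrow> ('a, 'v) qpath \<Rightarrow> (('a, 'v) qpath \<times> nat) set" where
  "Sub Q R n p = {(q, i). q \<in> Gamma Q R (n - 1) \<and> occ_at Q q i p}"

end

theory Submission
  imports Defs
begin

text \<open>Number the positions of p from 0 to L = plen p in written order. A left
  ambiguity u_{-1} u_0 \<cdots> u_m occurring in p is described by its cut positions
  E 0 = E 1 < E 2 < \<dots> < E (m + 2): each pair u_{k-1} u_k ends at the first position
  at which, counted from the start of u_{k-1}, a relation is complete. Right
  ambiguities are described dually, and a greedy construction turns the cuts of a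
  left decomposition into those of a right decomposition of the same path, so
  left and right ambiguities agree. By minimality of the pieces, the cuts are
  determined by the starting position, so decompositions are unique.

  Now let E be the cuts of p \<in> \<Gamma>_n and G those of an (n - 1)-ambiguity occurring at
  offset i. If i = 0, uniqueness gives G = E, so the occurrence is \<sigma>_{n-1}(p). If
  i > 0, minimality of the pieces of E forces E (2k + 2) \<le> G (2k + 1) for every k.
  Since n is even, this reaches E (n + 2) \<le> G (n + 1): the occurrence ends at the end
  of p, and uniqueness of right decompositions identifies it with \<pi>_{n-1}(p).\<close>

section \<open>Chains of cut positions\<close>

text \<open>The cuts E 0 \<le> \<dots> \<le> E l of a left decomposition u_{-1} u_0 \<cdots> u_{l-2}, the piece
  u_{k-1} occupying the positions from E k to E (Suc k); Rel x y says that the positions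
  from x to y contain a relation. Dually, the piece v_{k-1} of a right decomposition
  v_{l-2} \<cdots> v_0 v_{-1} occupies the positions from F (Suc k) to F k.\<close>
definition left_chain :: "(nat \<Rightarrow> nat \<Rightarrow> bool) \<Rightarrow> nat \<Rightarrow> (nat \<Rightarrow> nat) \<Rightarrow> bool" where
  "left_chain Rel l E \<longleftrightarrow>
    (\<forall>k<l. E k \<le> E (Suc k)) \<and> E 1 = E 0 \<and> (2 \<le> l \<longrightarrow> E 2 = Suc (E 1))
    \<and> (\<forall>k<l. \<not> Rel (E k) (E (Suc k)))
    \<and> (\<forall>k. 1 \<le> k \<and> Suc k < l \<longrightarrow> Rel (E k) (E (k+2))
          \<and> (\<forall>y. E k \<le> y \<and> y < E (k+2) \<longrightarrow> \<not> Rel (E k) y))"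

definition right_chain :: "(nat \<Rightarrow> nat \<Rightarrow> bool) \<Rightarrow> nat \<Rightarrow> (nat \<Rightarrow> nat) \<Rightarrow> bool" where
  "right_chain Rel l F \<longleftrightarrow>
    (\<forall>k<l. F (Suc k) \<le> F k) \<and> F 1 = F 0 \<and> (2 \<le> l \<longrightarrow> Suc (F 2) = F 1)
    \<and> (\<forall>k<l. \<not> Rel (F (Suc k)) (F k))
    \<and> (\<forall>k. 1 \<le> k \<and> Suc k < l \<longrightarrow> Rel (F (k+2)) (F k)
          \<and> (\<forall>x. F (k+2) < x \<and> x \<le> F k \<longrightarrow> \<not> Rel x (F k)))"

lemma left_chainD:
  assumes "left_chain Rel l E"
  shows "\<And>k. k < l \<Longrightarrow> E k \<le> E (Suc k)" "E 1 = E 0" "2 \<le> l \<Longrightarrow> E 2 = Suc (E 1)"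
    "\<And>k. k < l \<Longrightarrow> \<not> Rel (E k) (E (Suc k))"
    "\<And>k. 1 \<le> k \<Longrightarrow> Suc k < l \<Longrightarrow> Rel (E k) (E (k+2))"
    "\<And>k y. 1 \<le> k \<Longrightarrow> Suc k < l \<Longrightarrow> E k \<le> y \<Longrightarrow> y < E (k+2) \<Longrightarrow> \<not> Rel (E k) y"
  using assms unfolding left_chain_def by blast+

lemma right_chainD:
  assumes "right_chain Rel l F"
  shows "\<And>k. k < l \<Longrightarrow> F (Suc k) \<le> F k" "F 1 = F 0" "2 \<le> l \<Longrightarrow> Suc (F 2) = F 1"
    "\<And>k. k < l \<Longrightarrow> \<not> Rel (F (Suc k)) (F k)"
    "\<And>k. 1 \<le> k \<Longrightarrow> Suc k < l \<Longrightarrow> Rel (F (k+2)) (F k)"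
    "\<And>k x. 1 \<le> k \<Longrightarrow> Suc k < l \<Longrightarrow> F (k+2) < x \<Longrightarrow> x \<le> F k \<Longrightarrow> \<not> Rel x (F k)"
  using assms unfolding right_chain_def by blast+

lemma left_chain_truncate: "left_chain Rel l E \<Longrightarrow> l' \<le> l \<Longrightarrow> left_chain Rel l' E"
  unfolding left_chain_def by auto

lemma right_chain_truncate: "right_chain Rel l F \<Longrightarrow> l' \<le> l \<Longrightarrow> right_chain Rel l' F"
  unfolding right_chain_def by auto

lemma mono_upto:
  fixes E :: "nat \<Rightarrow> 'a::preorder"
  assumes "\<forall>k<l. E k \<le> E (Suc k)" "i \<le> j" "j \<le> l"
  shows "E i \<le> E j"
  using assms(2,3)
proof (induction j)
  case (Suc j)
  then show ?case
    using assms(1) by (cases "i = Suc j") (auto intro: order_trans)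
qed simp

lemma left_chain_mono: "left_chain Rel l E \<Longrightarrow> i \<le> j \<Longrightarrow> j \<le> l \<Longrightarrow> E i \<le> E j"
  using mono_upto[of l E] unfolding left_chain_def by blast

lemma right_chain_antimono: "right_chain Rel l F \<Longrightarrow> i \<le> j \<Longrightarrow> j \<le> l \<Longrightarrow> F j \<le> F i"
  using mono_upto[of l "\<lambda>k. - int (F k)"] unfolding right_chain_def by force

text \<open>Every piece u_k is nontrivial: u_0 is an arrow, and for k \<ge> 1 the pair u_{k-1} u_k
  contains a relation while u_{k-1} does not.\<close>
lemma left_chain_strict:
  assumes E: "left_chain Rel l E" and "1 \<le> k" "k < l"
  shows "E k < E (Suc k)"
proof (cases "k = 1")
  case True
  then show ?thesis using left_chainD(3)[OF E] assms by (simp add: numeral_2_eq_2)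
next
  case False
  have "Rel (E (k - 1)) (E (Suc k))"
    using left_chainD(5)[OF E, of "k - 1"] False assms by (simp add: numeral_2_eq_2)
  moreover have "\<not> Rel (E (k - 1)) (E k)"
    using left_chainD(4)[OF E, of "k - 1"] False assms by simp
  ultimately show ?thesis using left_chainD(1)[OF E, of k] assms(3) by (metis le_less)
qed

lemma left_chain_unique:
  assumes E: "left_chain Rel l E" and E': "left_chain Rel l' E'" and "E 0 = E' 0"
  shows "k \<le> l \<Longrightarrow> k \<le> l' \<Longrightarrow> E k = E' k"
proof (induction k rule: less_induct)
  case (less k)
  show ?case
  proof (cases "k \<le> 2")
    case True
    then consider "k = 0" | "k = 1" | "k = 2" by linarith
    then show ?thesis
      using assms(3) left_chainD(2,3)[OF E] left_chainD(2,3)[OF E'] less.prems by cases auto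
  next
    case False
    define j where "j = k - 2"
    have k: "k = j + 2" "1 \<le> j" using False unfolding j_def by auto
    have IH: "E j = E' j" using less.IH[of j] less.prems k by simp
    have "E j \<le> E k" "E' j \<le> E' k"
      using left_chain_mono[OF E, of j k] left_chain_mono[OF E', of j k] k less.prems by auto
    moreover have "Rel (E j) (E k)" "Rel (E' j) (E' k)"
      using left_chainD(5)[OF E, of j] left_chainD(5)[OF E', of j] k less.prems by auto
    moreover have "\<not> Rel (E j) (E' k)" if "E' k < E k"
      using left_chainD(6)[OF E, of j "E' k"] k less.prems IH that \<open>E' j \<le> E' k\<close> by simp
    moreover have "\<not> Rel (E' j) (E k)" if "E k < E' k"
      using left_chainD(6)[OF E', of j "E k"] k less.prems IH that \<open>E j \<le> E k\<close> by simp
    ultimately show ?thesis using IH by (metis linorder_neqE_nat)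
  qed
qed

lemma right_chain_iff_left_chain_reflected:
  assumes Rel': "\<And>x y. x \<le> L \<Longrightarrow> y \<le> L \<Longrightarrow> Rel' x y \<longleftrightarrow> Rel (L - y) (L - x)"
    and bounded: "\<And>k. k \<le> l \<Longrightarrow> F k \<le> L" and "1 \<le> l"
  shows "right_chain Rel l F \<longleftrightarrow> left_chain Rel' l (\<lambda>k. L - F k)"
proof -
  have b: "\<And>k. k \<le> l \<Longrightarrow> L - (L - F k) = F k" using bounded by simp
  have step: "(F (Suc k) \<le> F k) \<longleftrightarrow> (L - F k \<le> L - F (Suc k))"
    "Rel' (L - F k) (L - F (Suc k)) \<longleftrightarrow> Rel (F (Suc k)) (F k)" if "k < l" for k
    using that bounded[of k] bounded[of "Suc k"] Rel' b by auto
  have pair: "Rel' (L - F k) (L - F (k+2)) \<longleftrightarrow> Rel (F (k+2)) (F k)"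
    "(\<forall>x. F (k+2) < x \<and> x \<le> F k \<longrightarrow> \<not> Rel x (F k)) \<longleftrightarrow>
     (\<forall>y. L - F k \<le> y \<and> y < L - F (k+2) \<longrightarrow> \<not> Rel' (L - F k) y)"
    if "Suc k < l" for k
  proof -
    have bk: "F k \<le> L" "F (k+2) \<le> L" using that bounded by auto
    then show "Rel' (L - F k) (L - F (k+2)) \<longleftrightarrow> Rel (F (k+2)) (F k)"
      using Rel' b that by auto
    show "(\<forall>x. F (k+2) < x \<and> x \<le> F k \<longrightarrow> \<not> Rel x (F k)) \<longleftrightarrow>
          (\<forall>y. L - F k \<le> y \<and> y < L - F (k+2) \<longrightarrow> \<not> Rel' (L - F k) y)"
    proof (intro iffI allI impI)
      fix y assume "\<forall>x. F (k+2) < x \<and> x \<le> F k \<longrightarrow> \<not> Rel x (F k)"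
        and y: "L - F k \<le> y \<and> y < L - F (k+2)"
      moreover have "y \<le> L" using y by linarith
      ultimately show "\<not> Rel' (L - F k) y"
        using Rel'[of "L - F k" y] bk by (auto dest: spec[of _ "L - y"])
    next
      fix x assume "\<forall>y. L - F k \<le> y \<and> y < L - F (k+2) \<longrightarrow> \<not> Rel' (L - F k) y"
        and "F (k+2) < x \<and> x \<le> F k"
      then show "\<not> Rel x (F k)"
        using Rel'[of "L - F k" "L - x"] bk by (auto dest: spec[of _ "L - x"])
    qed
  qed
  have ends: "F 1 = F 0 \<longleftrightarrow> L - F 1 = L - F 0"
    "2 \<le> l \<longrightarrow> (Suc (F 2) = F 1 \<longleftrightarrow> L - F 2 = Suc (L - F 1))"
    using bounded[of 0] bounded[of 1] bounded[of 2] \<open>1 \<le> l\<close> by auto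
  show ?thesis
    unfolding left_chain_def right_chain_def
      using step pair ends by (auto simp del: diff_diff_cancel)
qed

lemma right_chain_unique:
  assumes F: "right_chain Rel l F" and F': "right_chain Rel l' F'" and "F 0 = F' 0"
    and "1 \<le> l" "1 \<le> l'" and "k \<le> l" "k \<le> l'"
  shows "F k = F' k"
proof -
  define Rel' where "Rel' x y \<longleftrightarrow> Rel (F 0 - y) (F 0 - x)" for x y
  have "F k \<le> F 0" "F' k \<le> F 0"
    using right_chain_antimono[OF F, of 0 k] right_chain_antimono[OF F', of 0 k] assms by auto
  moreover have "left_chain Rel' l (\<lambda>k. F 0 - F k)" "left_chain Rel' l' (\<lambda>k. F' 0 - F' k)"
    using right_chain_iff_left_chain_reflected[of "F 0" Rel' Rel l F]
      right_chain_iff_left_chain_reflected[of "F' 0" Rel' Rel l' F']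
      right_chain_antimono[OF F, of 0] right_chain_antimono[OF F', of 0] F F' assms(3-5)
    unfolding Rel'_def by auto
  ultimately show ?thesis using left_chain_unique[of Rel' l _ l' _ k] assms(3,6,7) by fastforce
qed

lemma greatest_below:
  fixes a b :: nat
  assumes "a \<le> b" "P a"
  shows "a \<le> (GREATEST x. x \<le> b \<and> P x)" "(GREATEST x. x \<le> b \<and> P x) \<le> b"
    "P (GREATEST x. x \<le> b \<and> P x)"
  using GreatestI_nat[of "\<lambda>x. x \<le> b \<and> P x" a b] Greatest_le_nat[of "\<lambda>x. x \<le> b \<and> P x" a b] assms
  by auto

locale interval_relation =
  fixes Rel :: "nat \<Rightarrow> nat \<Rightarrow> bool"
  assumes widen: "Rel x y \<Longrightarrow> x' \<le> x \<Longrightarrow> y \<le> y' \<Longrightarrow> Rel x' y'"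
    and gap: "Rel x y \<Longrightarrow> Suc x < y"

text \<open>Starting from the end L, each new piece is the shortest one that completes a
  relation together with the previous piece.\<close>
fun greedy_right_chain :: "(nat \<Rightarrow> nat \<Rightarrow> bool) \<Rightarrow> nat \<Rightarrow> nat \<Rightarrow> nat" where
  "greedy_right_chain Rel L 0 = L"
| "greedy_right_chain Rel L (Suc 0) = L"
| "greedy_right_chain Rel L (Suc (Suc 0)) = L - 1"
| "greedy_right_chain Rel L (Suc (Suc (Suc k))) =
     (GREATEST x. x \<le> greedy_right_chain Rel L (Suc k) \<and> Rel x (greedy_right_chain Rel L (Suc k)))"

lemma greedy_right_chain_step:
  "1 \<le> k \<Longrightarrow> greedy_right_chain Rel L (k + 2) =
     (GREATEST x. x \<le> greedy_right_chain Rel L k \<and> Rel x (greedy_right_chain Rel L k))"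
  by (cases k) auto

context interval_relation
begin

lemma greedy_right_chain_bounds:
  assumes E: "left_chain Rel l E" and "2 \<le> l" and EL: "E l = L"
  shows "1 \<le> m \<Longrightarrow> m \<le> l \<Longrightarrow> E (l + 1 - m) \<le> greedy_right_chain Rel L m
    \<and> (2 \<le> m \<longrightarrow> greedy_right_chain Rel L m < E (l + 2 - m))"
proof (induction m rule: less_induct)
  case (less m)
  let ?F = "greedy_right_chain Rel L"
  consider "m = 1" | "m = 2" | "3 \<le> m" using less.prems by linarith
  then show ?case
  proof cases
    case 1
    then show ?thesis using EL by simp
  next
    case 2
    have "E (l - 1) < E (Suc (l - 1))" using left_chain_strict[OF E, of "l - 1"] \<open>2 \<le> l\<close> by simp
    then show ?thesis using 2 EL \<open>2 \<le> l\<close> by (simp add: numeral_2_eq_2)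
  next
    case 3
    define j where "j = l + 1 - m"
    define b where "b = ?F (m - 2)"
    have j: "1 \<le> j" "j + 2 \<le> l" "m - 2 + 2 = m" "l + 1 - (m - 2) = j + 2"
      "l + 2 - (m - 2) = j + 3" "l + 2 - m = j + 1"
      using 3 less.prems unfolding j_def by auto
    have Fm: "?F m = (GREATEST x. x \<le> b \<and> Rel x b)"
      using greedy_right_chain_step[of "m - 2" Rel L] 3 j(3) unfolding b_def by simp
    have IH: "E (j + 2) \<le> b" "2 \<le> m - 2 \<Longrightarrow> b < E (j + 3)"
      using less.IH[of "m - 2"] 3 less.prems j(4,5) unfolding b_def by auto
    have "Rel (E j) (E (j + 2))" using left_chainD(5)[OF E, of j] j by auto
    then have Rel_b: "Rel (E j) b" using widen IH(1) by blast
    have Ej_b: "E j \<le> b" using left_chain_mono[OF E, of j "j + 2"] IH(1) j by auto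
    have no_Rel_b: "\<not> Rel (E (j + 1)) b"
    proof (cases "b = E (j + 2)")
      case True
      then show ?thesis using left_chainD(4)[OF E, of "j + 1"] j by auto
    next
      case False
      then have "m \<noteq> 3" using EL j unfolding b_def j_def by (auto simp: numeral_3_eq_3)
      then have "j + 2 < l" "2 \<le> m - 2" using 3 less.prems unfolding j_def by auto
      then have "b < E ((j + 1) + 2)" "j + 2 < l" using IH(2) by (auto simp: numeral_3_eq_3)
      moreover have "E (j + 1) \<le> b" using left_chain_mono[OF E, of "j + 1" "j + 2"] IH(1) j by auto
      ultimately show ?thesis using left_chainD(6)[OF E, of "j + 1" b] by simp
    qed
    have "E j \<le> ?F m" "Rel (?F m) b"
      using Fm greatest_below[of "E j" b "\<lambda>x. Rel x b"] Ej_b Rel_b by auto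
    moreover have "?F m < E (j + 1)" using widen[OF \<open>Rel (?F m) b\<close>, of "E (j + 1)" b] no_Rel_b
      by (meson not_le order_refl)
    ultimately show ?thesis using j(6) unfolding j_def by simp
  qed
qed

lemma greedy_right_chain_pieces_outside:
  assumes E: "left_chain Rel l E" and "2 \<le> l" "k < l"
  shows "\<not> Rel (greedy_right_chain Rel (E l) (Suc k)) (greedy_right_chain Rel (E l) k)"
proof
  let ?F = "greedy_right_chain Rel (E l)"
  assume R: "Rel (?F (Suc k)) (?F k)"
  note bounds = greedy_right_chain_bounds[OF E \<open>2 \<le> l\<close> refl]
  show False
  proof (cases "k \<le> 1")
    case True
    then show False using gap[OF R] by (cases k) auto
  next
    case False
    have "Rel (E (l - k)) (?F k)" using widen[OF R] bounds[of "Suc k"] assms(3) by simp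
    moreover have "E (l - k) \<le> ?F k"
      using left_chain_mono[OF E, of "l - k" "l + 1 - k"] bounds[of k] assms(3) False
      by (simp add: Suc_diff_le Suc_le_eq)
    moreover have "?F k < E ((l - k) + 2)"
      using bounds[of k] assms(3) False by (simp add: Suc_diff_le)
    moreover have "1 \<le> l - k" "Suc (l - k) < l" using assms(3) False by auto
    ultimately show False using left_chainD(6)[OF E, of "l - k" "?F k"] by simp
  qed
qed

lemma greedy_right_chain_pairs:
  assumes E: "left_chain Rel l E" and "1 \<le> k" "Suc k < l"
  defines "F \<equiv> greedy_right_chain Rel (E l)"
  shows "Rel (F (k + 2)) (F k)" and "F (k + 2) < x \<Longrightarrow> x \<le> F k \<Longrightarrow> \<not> Rel x (F k)"
proof -
  have lower: "E (l + 1 - k) \<le> F k"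
    using greedy_right_chain_bounds[OF E _ refl, of k] assms(2,3) unfolding F_def by simp
  have "Rel (E (l - 1 - k)) (E ((l - 1 - k) + 2))" using left_chainD(5)[OF E] assms(2,3) by simp
  moreover have "(l - 1 - k) + 2 = l + 1 - k" using assms(3) by simp
  ultimately have R: "Rel (E (l - 1 - k)) (F k)" using widen lower by fastforce
  have "l - 1 - k \<le> l + 1 - k" "l + 1 - k \<le> l" using assms(2,3) by auto
  then have "E (l - 1 - k) \<le> F k"
    using left_chain_mono[OF E, of "l - 1 - k" "l + 1 - k"] lower by simp
  then show "Rel (F (k + 2)) (F k)"
    using greatest_below(3)[of "E (l - 1 - k)" "F k" "\<lambda>x. Rel x (F k)"] R
      greedy_right_chain_step[OF assms(2)] unfolding F_def by simp
  show "\<not> Rel x (F k)" if "F (k + 2) < x" "x \<le> F k"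
    using Greatest_le_nat[of "\<lambda>x. x \<le> F k \<and> Rel x (F k)" x "F k"] that
      greedy_right_chain_step[OF assms(2)] unfolding F_def by auto
qed

lemma left_chain_to_right_chain:
  assumes E: "left_chain Rel l E" and "1 \<le> l"
  shows "right_chain Rel l (greedy_right_chain Rel (E l))"
    and "greedy_right_chain Rel (E l) l = E 0"
proof -
  let ?F = "greedy_right_chain Rel (E l)"
  have "right_chain Rel l ?F \<and> ?F l = E 0"
  proof (cases "l = 1")
    case True
    then show ?thesis
      using gap[of "E 1" "E 1"] left_chainD(2)[OF E] unfolding right_chain_def by auto
  next
    case False
    then have l: "2 \<le> l" using \<open>1 \<le> l\<close> by simp
    note bounds = greedy_right_chain_bounds[OF E l refl]
    have "?F l = E 0" using bounds[of l] l left_chainD(2,3)[OF E] by simp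
    moreover have "?F (Suc k) \<le> ?F k" if "k < l" for k
      using bounds[of "Suc k"] bounds[of k] that by (cases "k \<le> 1") (auto simp: le_Suc_eq)
    moreover have "1 \<le> E l" using left_chain_mono[OF E, of 2 l] left_chainD(3)[OF E] l by simp
    ultimately show ?thesis
      unfolding right_chain_def
      using greedy_right_chain_pieces_outside[OF E l] greedy_right_chain_pairs[OF E] l
      by (simp add: numeral_2_eq_2)
  qed
  then show "right_chain Rel l ?F" "?F l = E 0" by auto
qed

lemma right_chain_to_left_chain:
  assumes F: "right_chain Rel l F" and "1 \<le> l"
  obtains E where "left_chain Rel l E" "E 0 = F l" "E l = F 0"
proof -
  define L where "L = F 0"
  define Rel' where "Rel' x y \<longleftrightarrow> Rel (L - y) (L - x)" for x y
  interpret reflected: interval_relation Rel'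
  proof
    show "Rel' x' y'" if "Rel' x y" "x' \<le> x" "y \<le> y'" for x y x' y'
      using that widen[of "L - y" "L - x" "L - y'" "L - x'"] unfolding Rel'_def by simp
    show "Suc x < y" if "Rel' x y" for x y
      using that gap[of "L - y" "L - x"] unfolding Rel'_def by linarith
  qed
  have F_le: "F k \<le> L" if "k \<le> l" for k
    using right_chain_antimono[OF F, of 0 k] that unfolding L_def by simp
  have E': "left_chain Rel' l (\<lambda>k. L - F k)"
    using right_chain_iff_left_chain_reflected[of L Rel' Rel l F] F F_le \<open>1 \<le> l\<close>
    unfolding Rel'_def by blast
  define G where "G = greedy_right_chain Rel' (L - F l)"
  have G: "right_chain Rel' l G" "G l = 0" "G 0 = L - F l"
    using reflected.left_chain_to_right_chain[OF E' \<open>1 \<le> l\<close>] unfolding G_def L_def by auto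
  have G_le: "G k \<le> L" if "k \<le> l" for k
    using right_chain_antimono[OF G(1), of 0 k] G(3) that by simp
  have "left_chain Rel l (\<lambda>k. L - G k)"
    using right_chain_iff_left_chain_reflected[of L Rel Rel' l G] G(1) G_le \<open>1 \<le> l\<close>
    unfolding Rel'_def by simp
  moreover have "L - G 0 = F l" "L - G l = F 0"
    using G F_le[of l] \<open>1 \<le> l\<close> unfolding L_def by auto
  ultimately show thesis using that by blast
qed

text \<open>In the induction step, the pair of pieces of G from G (2k+1) to G (2k+3) contains
  a relation and starts no later than E (2k+2), so by minimality of the pair of pieces
  of E starting there it cannot end before E (2k+4).\<close>
lemma shifted_left_chain_overtakes:
  assumes E: "left_chain Rel (2 * m + 2) E" and G: "left_chain Rel (2 * m + 1) G"
    and "E 0 < G 0"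
  shows "E (2 * m + 2) \<le> G (2 * m + 1)"
proof -
  have "E (2 * k + 2) \<le> G (2 * k + 1)" if "k \<le> m" for k
    using that
  proof (induction k)
    case 0
    then show ?case
      using \<open>E 0 < G 0\<close> left_chainD(2,3)[OF E] left_chainD(2)[OF G] by (simp add: numeral_2_eq_2)
  next
    case (Suc k)
    have IH: "E (2 * k + 2) \<le> G (2 * k + 1)" using Suc by simp
    have "Rel (G (2 * k + 1)) (G ((2 * k + 1) + 2))" using left_chainD(5)[OF G] Suc.prems by simp
    then have "Rel (E (2 * k + 2)) (G (2 * k + 3))"
      using widen[OF _ IH] by (simp add: numeral_3_eq_3)
    moreover have "E (2 * k + 2) \<le> G (2 * k + 3)"
      using left_chain_mono[OF G, of "2 * k + 1" "2 * k + 3"] IH Suc.prems by simp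
    ultimately have "\<not> G (2 * k + 3) < E ((2 * k + 2) + 2)"
      using left_chainD(6)[OF E, of "2 * k + 2" "G (2 * k + 3)"] Suc.prems by auto
    then show ?case by (simp add: numeral_3_eq_3)
  qed
  then show ?thesis by simp
qed

end


section \<open>Products of composable paths\<close>

lemma composable_tl: "composable Q (x # xs) \<Longrightarrow> xs \<noteq> [] \<Longrightarrow> composable Q xs"
  unfolding composable_def by (auto dest!: spec[of _ "Suc _"])

lemma pcat_is_path:
  assumes a: "is_path Q a" and b: "is_path Q b" and c: "ptgt Q b = psrc a"
  shows "is_path Q (pcat a b) \<and> ptgt Q (pcat a b) = ptgt Q a"
proof -
  have ptgt: "ptgt Q (pcat a b) = ptgt Q a"
    using c unfolding ptgt_def psrc_def pcat_def by auto
  have source: "snd (pcat a b) \<in> verts Q" using b unfolding is_path_def pcat_def by auto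
  have arrows: "set (fst (pcat a b)) \<subseteq> arrs Q" using a b unfolding is_path_def pcat_def by auto
  have first_arrow: "fst (pcat a b) \<noteq> [] \<longrightarrow> srcA Q (last (fst (pcat a b))) = snd (pcat a b)"
  proof (cases "fst b = []")
    case True
    then show ?thesis using a c unfolding is_path_def pcat_def ptgt_def psrc_def by auto
  next
    case False
    then show ?thesis using b unfolding is_path_def pcat_def by auto
  qed
  have consecutive: "\<forall>i. Suc i < length (fst (pcat a b))
      \<longrightarrow> srcA Q (fst (pcat a b) ! i) = tgtA Q (fst (pcat a b) ! Suc i)"
  proof (intro allI impI)
    fix i assume i: "Suc i < length (fst (pcat a b))"
    let ?la = "length (fst a)"
    consider "Suc i < ?la" | "Suc i = ?la" | "?la < Suc i" by linarith
    then show "srcA Q (fst (pcat a b) ! i) = tgtA Q (fst (pcat a b) ! Suc i)"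
    proof cases
      case 1 then show ?thesis using a unfolding is_path_def pcat_def by (simp add: nth_append)
    next
      case 2
      then have ne: "fst a \<noteq> []" "fst b \<noteq> []" using i unfolding pcat_def by auto
      have ii: "i = length (fst a) - 1" using 2 by simp
      have "fst (pcat a b) ! i = last (fst a)"
        using 2 ne unfolding pcat_def by (simp add: nth_append last_conv_nth ii)
      moreover have "fst (pcat a b) ! Suc i = hd (fst b)"
        using 2 ne unfolding pcat_def by (simp add: nth_append hd_conv_nth)
      moreover have "srcA Q (last (fst a)) = snd a" using a ne unfolding is_path_def by auto
      moreover have "snd a = tgtA Q (hd (fst b))" using c ne unfolding ptgt_def psrc_def by auto
      ultimately show ?thesis by simp
    next
      case 3
      then have "Suc (i - ?la) < length (fst b)" using i unfolding pcat_def by auto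
      then show ?thesis
        using b 3 unfolding is_path_def pcat_def by (auto simp: nth_append Suc_diff_le)
    qed
  qed
  show ?thesis using source arrows first_arrow consecutive ptgt unfolding is_path_def by blast
qed

lemma pprod_snoc: "xs \<noteq> [] \<Longrightarrow> pprod (xs @ [y]) = pcat (pprod xs) y"
  unfolding pprod_def pcat_def by simp

lemma pprod_is_path: "composable Q xs \<Longrightarrow> is_path Q (pprod xs) \<and> ptgt Q (pprod xs) = ptgt Q (hd xs)"
proof (induction xs)
  case Nil then show ?case unfolding composable_def by simp
next
  case (Cons x xs)
  show ?case
  proof (cases "xs = []")
    case True
    have "pprod [x] = x" unfolding pprod_def by simp
    then show ?thesis using True Cons.prems unfolding composable_def by simp
  next
    case False
    have eq: "pprod (x # xs) = pcat x (pprod xs)" using False unfolding pprod_def pcat_def by simp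
    have IH: "is_path Q (pprod xs) \<and> ptgt Q (pprod xs) = ptgt Q (hd xs)"
      using Cons.IH composable_tl[OF Cons.prems False] by blast
    have "ptgt Q (xs ! 0) = psrc x" using Cons.prems False unfolding composable_def by fastforce
    then have c: "ptgt Q (pprod xs) = psrc x" using IH False by (simp add: hd_conv_nth)
    have "is_path Q x" using Cons.prems unfolding composable_def by simp
    then show ?thesis using pcat_is_path[OF _ _ c] IH eq by simp
  qed
qed


section \<open>Subpaths of a fixed path\<close>

text \<open>Positions are counted in written order: subpath Q p x y runs from the vertex
  at position y to the vertex at position x.\<close>
definition subpath :: "('v, 'a, 'b) quiver_scheme \<Rightarrow> ('a, 'v) qpath \<Rightarrow> nat \<Rightarrow> nat
    \<Rightarrow> ('a, 'v) qpath" where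
  "subpath Q p x y = (take (y - x) (drop x (fst p)), vertex_at Q p y)"

definition relation_between :: "('v, 'a, 'b) quiver_scheme \<Rightarrow> ('a, 'v) qpath set \<Rightarrow> ('a, 'v) qpath
    \<Rightarrow> nat \<Rightarrow> nat \<Rightarrow> bool" where
  "relation_between Q R p x y \<longleftrightarrow> (\<exists>r\<in>R. \<exists>j. x \<le> j \<and> j + plen r \<le> y \<and> occ_at Q r j p)"

lemma interval_relation_between:
  assumes "\<forall>r\<in>R. 2 \<le> plen r"
  shows "interval_relation (relation_between Q R p)"
proof
  show "relation_between Q R p x' y'"
    if "relation_between Q R p x y" "x' \<le> x" "y \<le> y'" for x y x' y'
    using that unfolding relation_between_def by (meson le_trans)
  show "Suc x < y" if "relation_between Q R p x y" for x y
    using that assms unfolding relation_between_def by fastforce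
qed

locale quiver_path =
  fixes Q :: "('v, 'a, 'b) quiver_scheme" and p :: "('a, 'v) qpath"
  assumes finite: "finite_quiver Q" and path: "is_path Q p"
begin

abbreviation "w \<equiv> fst p"
abbreviation "L \<equiv> length (fst p)"

abbreviation left_pieces :: "(nat \<Rightarrow> nat) \<Rightarrow> nat \<Rightarrow> ('a, 'v) qpath list" where
  "left_pieces E l \<equiv> map (\<lambda>k. subpath Q p (E k) (E (Suc k))) [0..<l]"

abbreviation right_pieces :: "(nat \<Rightarrow> nat) \<Rightarrow> nat \<Rightarrow> ('a, 'v) qpath list" where
  "right_pieces F l \<equiv> map (\<lambda>k. subpath Q p (F (Suc k)) (F k)) [0..<l]"

lemma path_unfolded: "snd p \<in> verts Q" "set w \<subseteq> arrs Q" "w \<noteq> [] \<Longrightarrow> srcA Q (last w) = snd p"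
  "\<And>i. Suc i < L \<Longrightarrow> srcA Q (w ! i) = tgtA Q (w ! Suc i)"
  using path unfolding is_path_def by auto

lemma plen_p: "plen p = L" by (simp add: plen_def)

lemma plen_subpath: "x \<le> y \<Longrightarrow> y \<le> L \<Longrightarrow> plen (subpath Q p x y) = y - x"
  by (simp add: subpath_def plen_def)

lemma fst_subpath_nth: "x \<le> y \<Longrightarrow> y \<le> L \<Longrightarrow> i < y - x \<Longrightarrow> fst (subpath Q p x y) ! i = w ! (x + i)"
  by (simp add: subpath_def)

lemma vertex_at_in_verts: "k \<le> L \<Longrightarrow> vertex_at Q p k \<in> verts Q"
proof -
  assume k: "k \<le> L"
  show ?thesis
  proof (cases "k < L")
    case True
    then have "w ! k \<in> arrs Q" using path_unfolded(2) nth_mem by blast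
    then show ?thesis using finite True unfolding finite_quiver_def vertex_at_def plen_def by auto
  next
    case False
    then show ?thesis using path_unfolded(1) unfolding vertex_at_def plen_def by auto
  qed
qed

lemma srcA_nth_before: "1 \<le> y \<Longrightarrow> y \<le> L \<Longrightarrow> srcA Q (w ! (y - 1)) = vertex_at Q p y"
proof -
  assume y: "1 \<le> y" "y \<le> L"
  show ?thesis
  proof (cases "y < L")
    case True
    then have "srcA Q (w ! (y-1)) = tgtA Q (w ! Suc (y-1))"
      using path_unfolded(4)[of "y-1"] y by simp
    then show ?thesis using True y unfolding vertex_at_def plen_def by simp
  next
    case False
    then have "y = L" using y by simp
    moreover have "w \<noteq> []" using y \<open>y = L\<close> by auto
    ultimately show ?thesis
      using path_unfolded(3) unfolding vertex_at_def plen_def by (simp add: last_conv_nth)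
  qed
qed

lemma subpath_is_path: "x \<le> y \<Longrightarrow> y \<le> L \<Longrightarrow> is_path Q (subpath Q p x y)"
proof -
  assume xy: "x \<le> y" "y \<le> L"
  have source: "snd (subpath Q p x y) \<in> verts Q" using vertex_at_in_verts xy by (simp add: subpath_def)
  have arrows: "set (fst (subpath Q p x y)) \<subseteq> arrs Q" using path_unfolded(2) unfolding subpath_def
    by (auto dest: in_set_takeD in_set_dropD)
  have first_arrow: "fst (subpath Q p x y) \<noteq> []
      \<longrightarrow> srcA Q (last (fst (subpath Q p x y))) = snd (subpath Q p x y)"
  proof
    assume ne: "fst (subpath Q p x y) \<noteq> []"
    then have xy': "x < y" using xy by (simp add: subpath_def)
    have "last (fst (subpath Q p x y)) = fst (subpath Q p x y) ! (y - x - 1)"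
      using ne plen_subpath[OF xy] by (simp add: last_conv_nth plen_def)
    also have "\<dots> = w ! (y - 1)" using fst_subpath_nth[OF xy, of "y-x-1"] xy' by simp
    finally show "srcA Q (last (fst (subpath Q p x y))) = snd (subpath Q p x y)"
      using srcA_nth_before[of y] xy xy' by (simp add: subpath_def)
  qed
  have consecutive: "\<forall>i. Suc i < length (fst (subpath Q p x y))
      \<longrightarrow> srcA Q (fst (subpath Q p x y) ! i) = tgtA Q (fst (subpath Q p x y) ! Suc i)"
  proof (intro allI impI)
    fix i assume i: "Suc i < length (fst (subpath Q p x y))"
    then have i': "Suc i < y - x" using plen_subpath[OF xy] by (simp add: plen_def)
    show "srcA Q (fst (subpath Q p x y) ! i) = tgtA Q (fst (subpath Q p x y) ! Suc i)"
      using fst_subpath_nth[OF xy] i' path_unfolded(4)[of "x+i"] xy by simp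
  qed
  show ?thesis using source arrows first_arrow consecutive unfolding is_path_def by blast
qed

lemma vertex_at_subpath:
  "x \<le> y \<Longrightarrow> y \<le> L \<Longrightarrow> k \<le> y - x \<Longrightarrow> vertex_at Q (subpath Q p x y) k = vertex_at Q p (x + k)"
proof -
  assume xy: "x \<le> y" "y \<le> L" and k: "k \<le> y - x"
  show ?thesis
  proof (cases "k < y - x")
    case True
    have "x + k < L" using True xy by simp
    then show ?thesis using fst_subpath_nth[OF xy True] plen_subpath[OF xy] xy True
      unfolding vertex_at_def plen_def by simp
  next
    case False
    then have "k = y - x" using k by simp
    then have "vertex_at Q (subpath Q p x y) k = snd (subpath Q p x y)"
      using plen_subpath[OF xy] unfolding vertex_at_def by simp
    then show ?thesis using \<open>k = y - x\<close> xy by (simp add: subpath_def)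
  qed
qed

lemma occ_at_iff_subpath:
  "occ_at Q q i p \<longleftrightarrow> is_path Q q \<and> i + plen q \<le> L \<and> q = subpath Q p i (i + plen q)"
proof
  assume "occ_at Q q i p"
  then show "is_path Q q \<and> i + plen q \<le> L \<and> q = subpath Q p i (i + plen q)"
    unfolding occ_at_def subpath_def plen_def by (simp add: prod_eq_iff)
next
  assume "is_path Q q \<and> i + plen q \<le> L \<and> q = subpath Q p i (i + plen q)"
  then show "occ_at Q q i p" using path unfolding occ_at_def
    by (metis add_diff_cancel_left' fst_conv plen_def subpath_def snd_conv)
qed

lemma occ_at_subpath: "x \<le> y \<Longrightarrow> y \<le> L \<Longrightarrow> occ_at Q (subpath Q p x y) x p"
  using occ_at_iff_subpath subpath_is_path plen_subpath by simp

lemma occ_at_subpath_iff: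
  assumes xy: "x \<le> y" "y \<le> L"
  shows "occ_at Q q k (subpath Q p x y) \<longleftrightarrow> occ_at Q q (x+k) p \<and> k + plen q \<le> y - x"
proof (cases "k + plen q \<le> y - x")
  case False
  then show ?thesis unfolding occ_at_def using plen_subpath[OF xy] by simp
next
  case True
  have t: "take (plen q) (drop k (fst (subpath Q p x y))) = take (plen q) (drop (x+k) w)"
    using True unfolding subpath_def by (simp add: drop_take min_def add.commute)
  have v: "vertex_at Q (subpath Q p x y) (k + plen q) = vertex_at Q p (x + k + plen q)"
    using vertex_at_subpath[OF xy, of "k + plen q"] True by (simp add: add.assoc)
  show ?thesis unfolding occ_at_def
    using True t v subpath_is_path[OF xy] plen_subpath[OF xy] path xy
    by (auto simp: plen_def)
qed

lemma inI_subpath_iff: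
  assumes xy: "x \<le> y" "y \<le> L"
  shows "inI Q R (subpath Q p x y) \<longleftrightarrow> relation_between Q R p x y"
proof
  assume "inI Q R (subpath Q p x y)"
  then obtain r k where "r \<in> R" "occ_at Q r k (subpath Q p x y)" unfolding inI_def by blast
  then have o: "occ_at Q r (x+k) p" "k + plen r \<le> y - x" using occ_at_subpath_iff[OF xy] by auto
  have "x + k + plen r \<le> y" using o(2) xy by simp
  then show "relation_between Q R p x y" unfolding relation_between_def
    using o(1) \<open>r \<in> R\<close> by (intro bexI[of _ r] exI[of _ "x+k"]) auto
next
  assume "relation_between Q R p x y"
  then obtain r j where r: "r \<in> R" "x \<le> j" "j + plen r \<le> y" "occ_at Q r j p"
    unfolding relation_between_def by blast
  then have "occ_at Q r (j - x) (subpath Q p x y)"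
    using occ_at_subpath_iff[OF xy, of r "j-x"] by simp
  then show "inI Q R (subpath Q p x y)" unfolding inI_def using subpath_is_path[OF xy] r(1) by blast
qed

lemma pcat_subpath:
  assumes "x \<le> y" "y \<le> z" "z \<le> L"
  shows "pcat (subpath Q p x y) (subpath Q p y z) = subpath Q p x z"
proof -
  have e: "z-x = (y-x)+(z-y)" using assms by simp
  have d: "drop (y - x) (drop x w) = drop y w" using assms by simp
  have "take (z-x) (drop x w) = take (y-x) (drop x w) @ take (z-y) (drop y w)"
    unfolding e take_add d ..
  then show ?thesis unfolding pcat_def subpath_def by simp
qed

lemma ptgt_subpath: "x \<le> y \<Longrightarrow> y \<le> L \<Longrightarrow> ptgt Q (subpath Q p x y) = vertex_at Q p x"
  unfolding ptgt_def subpath_def vertex_at_def plen_def by (auto simp: hd_drop_conv_nth)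

lemma psrc_subpath: "psrc (subpath Q p x y) = vertex_at Q p y"
  unfolding psrc_def subpath_def by simp

lemma is_suffix_subpath_iff:
  assumes xz: "x \<le> z" "z \<le> L"
  shows "is_suffix Q q (subpath Q p x z) \<longleftrightarrow> (\<exists>y. x \<le> y \<and> y \<le> z \<and> q = subpath Q p x y)"
proof
  assume "is_suffix Q q (subpath Q p x z)"
  then have "occ_at Q q x p" "plen q \<le> z - x" unfolding is_suffix_def
    using occ_at_subpath_iff[OF xz, of q 0] by auto
  then show "\<exists>y. x \<le> y \<and> y \<le> z \<and> q = subpath Q p x y"
    using occ_at_iff_subpath xz by (intro exI[of _ "x + plen q"]) auto
next
  assume "\<exists>y. x \<le> y \<and> y \<le> z \<and> q = subpath Q p x y"
  then obtain y where y: "x \<le> y" "y \<le> z" "q = subpath Q p x y" by blast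
  have pl: "plen q = y - x" using y plen_subpath xz by simp
  have "occ_at Q q x p" using occ_at_iff_subpath[of q x] y pl subpath_is_path xz by simp
  then show "is_suffix Q q (subpath Q p x z)" unfolding is_suffix_def
    using occ_at_subpath_iff[OF xz, of q 0] pl y by simp
qed

lemma is_prefix_subpath_iff:
  assumes xz: "x \<le> z" "z \<le> L"
  shows "is_prefix Q q (subpath Q p x z) \<longleftrightarrow> (\<exists>y. x \<le> y \<and> y \<le> z \<and> q = subpath Q p y z)"
proof
  assume a: "is_prefix Q q (subpath Q p x z)"
  let ?k = "z - x - plen q"
  have "occ_at Q q ?k (subpath Q p x z)" using a unfolding is_prefix_def plen_subpath[OF xz] .
  then have o: "occ_at Q q (x + ?k) p" "?k + plen q \<le> z - x" using occ_at_subpath_iff[OF xz] by auto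
  then have pl: "plen q \<le> z - x" by simp
  then have e: "x + ?k + plen q = z" using xz by simp
  show "\<exists>y. x \<le> y \<and> y \<le> z \<and> q = subpath Q p y z" using o(1) occ_at_iff_subpath[of q "x + ?k"] e
    by (intro exI[of _ "x + ?k"]) auto
next
  assume "\<exists>y. x \<le> y \<and> y \<le> z \<and> q = subpath Q p y z"
  then obtain y where y: "x \<le> y" "y \<le> z" "q = subpath Q p y z" by blast
  have pl: "plen q = z - y" using y plen_subpath xz by simp
  have o: "occ_at Q q y p" using occ_at_iff_subpath[of q y] y pl subpath_is_path xz by simp
  have "z - x - plen q = y - x" using pl y by simp
  then show "is_prefix Q q (subpath Q p x z)" unfolding is_prefix_def plen_subpath[OF xz]
    using occ_at_subpath_iff[OF xz, of q "y - x"] o pl y by simp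
qed

lemma pprod_Cons_eq_subpath:
  assumes xs: "composable Q (x # xs)" "xs \<noteq> []"
    and prod: "pprod (x # xs) = subpath Q p a b" and "a \<le> b" "b \<le> L"
  obtains c where "a \<le> c" "c \<le> b" "x = subpath Q p a c" "pprod xs = subpath Q p c b"
proof -
  define c where "c = a + plen x"
  have f: "fst x @ concat (map fst xs) = take (b - a) (drop a w)"
    and snd_last: "snd (last xs) = vertex_at Q p b"
    using prod xs(2) unfolding pprod_def subpath_def by auto
  have c: "a \<le> c" "c \<le> b"
    using arg_cong[OF f, of length] assms(4,5) unfolding c_def plen_def by auto
  have "fst x = take (c - a) (drop a w)"
    using arg_cong[OF f, of "take (plen x)"] c unfolding c_def plen_def by simp
  moreover have "concat (map fst xs) = take (b - c) (drop c w)"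
    using arg_cong[OF f, of "drop (plen x)"] c assms(5) unfolding c_def plen_def
    by (simp add: drop_take add.commute)
  then have rest: "pprod xs = subpath Q p c b"
    using snd_last unfolding pprod_def subpath_def by simp
  moreover have "psrc x = vertex_at Q p c"
  proof -
    have "psrc x = ptgt Q (hd xs)"
      using xs unfolding composable_def by (cases xs) (auto dest: spec[of _ 0])
    also have "\<dots> = ptgt Q (pprod xs)" using pprod_is_path[OF composable_tl[OF xs]] by simp
    finally show ?thesis using rest ptgt_subpath c assms(5) by simp
  qed
  ultimately have "x = subpath Q p a c" unfolding psrc_def subpath_def by (simp add: prod_eq_iff)
  then show thesis using that c rest by blast
qed

lemma pprod_eq_subpath_left_pieces:
  "composable Q xs \<Longrightarrow> pprod xs = subpath Q p a b \<Longrightarrow> a \<le> b \<Longrightarrow> b \<le> L \<Longrightarrow>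
   \<exists>E. E 0 = a \<and> E (length xs) = b \<and> (\<forall>k<length xs. E k \<le> E (Suc k))
      \<and> xs = left_pieces E (length xs)"
proof (induction xs arbitrary: a)
  case Nil
  then show ?case unfolding composable_def by simp
next
  case (Cons x xs)
  show ?case
  proof (cases "xs = []")
    case True
    then have "x = subpath Q p a b" using Cons.prems unfolding pprod_def by (simp add: prod_eq_iff)
    then show ?thesis using True Cons.prems by (intro exI[of _ "\<lambda>k. if k = 0 then a else b"]) auto
  next
    case False
    obtain c where c: "a \<le> c" "c \<le> b" "x = subpath Q p a c" "pprod xs = subpath Q p c b"
      using pprod_Cons_eq_subpath[OF Cons.prems(1) False Cons.prems(2-4)] .
    obtain E where E: "E 0 = c" "E (length xs) = b" "\<forall>k<length xs. E k \<le> E (Suc k)"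
      "xs = left_pieces E (length xs)"
      using Cons.IH[OF composable_tl[OF Cons.prems(1) False] c(4) c(2) Cons.prems(4)] by blast
    let ?E = "\<lambda>k. case k of 0 \<Rightarrow> a | Suc k \<Rightarrow> E k"
    have "\<forall>k<length (x # xs). ?E k \<le> ?E (Suc k)"
      using E(1,3) c(1) by (auto split: nat.split)
    moreover have "x # xs = left_pieces ?E (length (x # xs))"
      using E(1,4) c(3) by (simp add: map_upt_Suc del: upt_Suc)
    ultimately show ?thesis using E(2) by (intro exI[of _ ?E]) auto
  qed
qed

lemma composable_left_pieces:
  assumes mono: "\<forall>k<l. E k \<le> E (Suc k)" and "E l \<le> L" and "1 \<le> l"
  shows "composable Q (left_pieces E l)"
proof -
  have le: "E i \<le> E j" if "i \<le> j" "j \<le> l" for i j using mono_upto[OF mono that] .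
  have bnd: "E k \<le> L" if "k \<le> l" for k using le[OF that order_refl] assms(2) by simp
  show ?thesis
    unfolding composable_def
  proof (intro conjI allI impI ballI)
    show "left_pieces E l \<noteq> []" using \<open>1 \<le> l\<close> by simp
  next
    fix y assume "y \<in> set (left_pieces E l)"
    then show "is_path Q y" using subpath_is_path le bnd by auto
  next
    fix i assume "Suc i < length (left_pieces E l)"
    then show "ptgt Q (left_pieces E l ! Suc i) = psrc (left_pieces E l ! i)"
      using ptgt_subpath psrc_subpath le bnd by simp
  qed
qed

lemma pprod_left_pieces:
  assumes "\<forall>k<l. E k \<le> E (Suc k)" and "E l \<le> L" and "1 \<le> l"
  shows "pprod (left_pieces E l) = subpath Q p (E 0) (E l)"
  using assms
proof (induction l)
  case (Suc l)
  show ?case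
  proof (cases "l = 0")
    case True
    then show ?thesis unfolding pprod_def subpath_def by simp
  next
    case False
    have "E 0 \<le> E l" "E l \<le> E (Suc l)" using mono_upto[OF Suc.prems(1), of 0 l] Suc.prems(1) by auto
    moreover have "pprod (left_pieces E l) = subpath Q p (E 0) (E l)"
      using Suc.IH Suc.prems False \<open>E l \<le> E (Suc l)\<close> by simp
    ultimately show ?thesis
      using pcat_subpath[of "E 0" "E l" "E (Suc l)"] pprod_snoc[of "left_pieces E l"]
        Suc.prems(2) False
      by simp
  qed
qed simp

lemma subpath_in_Bset_iff:
  "x \<le> y \<Longrightarrow> y \<le> L \<Longrightarrow> subpath Q p x y \<in> Bset Q R \<longleftrightarrow> \<not> relation_between Q R p x y"
  unfolding Bset_def using subpath_is_path inI_subpath_iff by auto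


lemma subpath_whole: "subpath Q p 0 L = p"
  unfolding subpath_def vertex_at_def plen_def by (simp add: prod_eq_iff)

section \<open>Decompositions as chains\<close>

lemma minimal_suffix_in_ideal_iff:
  assumes xz: "x \<le> z" "z \<le> L"
  shows "(inI Q R (subpath Q p x z)
      \<and> (\<forall>q. is_suffix Q q (subpath Q p x z) \<and> q \<noteq> subpath Q p x z \<longrightarrow> \<not> inI Q R q))
    \<longleftrightarrow> relation_between Q R p x z \<and> (\<forall>y. x \<le> y \<and> y < z \<longrightarrow> \<not> relation_between Q R p x y)"
proof -
  have proper: "subpath Q p x y \<noteq> subpath Q p x z" if "x \<le> y" "y < z" for y
  proof
    assume "subpath Q p x y = subpath Q p x z"
    then have "plen (subpath Q p x y) = plen (subpath Q p x z)" by simp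
    then show False using plen_subpath[of x y] plen_subpath[of x z] that xz by auto
  qed
  have "(\<forall>q. is_suffix Q q (subpath Q p x z) \<and> q \<noteq> subpath Q p x z \<longrightarrow> \<not> inI Q R q)
      \<longleftrightarrow> (\<forall>y. x \<le> y \<and> y < z \<longrightarrow> \<not> relation_between Q R p x y)"
  proof (intro iffI allI impI)
    fix y assume minimal: "\<forall>q. is_suffix Q q (subpath Q p x z) \<and> q \<noteq> subpath Q p x z \<longrightarrow> \<not> inI Q R q"
      and y: "x \<le> y \<and> y < z"
    have "is_suffix Q (subpath Q p x y) (subpath Q p x z)"
      using is_suffix_subpath_iff[OF xz, of "subpath Q p x y"] y by auto
    then have "\<not> inI Q R (subpath Q p x y)"
      using minimal[rule_format, of "subpath Q p x y"] proper[of y] y by blast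
    then show "\<not> relation_between Q R p x y" using inI_subpath_iff[of x y] xz y by simp
  next
    fix q assume "\<forall>y. x \<le> y \<and> y < z \<longrightarrow> \<not> relation_between Q R p x y"
      and q: "is_suffix Q q (subpath Q p x z) \<and> q \<noteq> subpath Q p x z"
    then obtain y where "x \<le> y" "y < z" "q = subpath Q p x y"
      using is_suffix_subpath_iff[OF xz] le_neq_implies_less by metis
    then show "\<not> inI Q R q" using inI_subpath_iff[of x y] xz \<open>\<forall>y. _\<close> by simp
  qed
  then show ?thesis using inI_subpath_iff[OF xz] by simp
qed

lemma minimal_prefix_in_ideal_iff:
  assumes xz: "x \<le> z" "z \<le> L"
  shows "(inI Q R (subpath Q p x z)
      \<and> (\<forall>q. is_prefix Q q (subpath Q p x z) \<and> q \<noteq> subpath Q p x z \<longrightarrow> \<not> inI Q R q))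
    \<longleftrightarrow> relation_between Q R p x z \<and> (\<forall>y. x < y \<and> y \<le> z \<longrightarrow> \<not> relation_between Q R p y z)"
proof -
  have proper: "subpath Q p y z \<noteq> subpath Q p x z" if "x < y" "y \<le> z" for y
  proof
    assume "subpath Q p y z = subpath Q p x z"
    then have "plen (subpath Q p y z) = plen (subpath Q p x z)" by simp
    then show False using plen_subpath[of y z] plen_subpath[of x z] that xz by auto
  qed
  have "(\<forall>q. is_prefix Q q (subpath Q p x z) \<and> q \<noteq> subpath Q p x z \<longrightarrow> \<not> inI Q R q)
      \<longleftrightarrow> (\<forall>y. x < y \<and> y \<le> z \<longrightarrow> \<not> relation_between Q R p y z)"
  proof (intro iffI allI impI)
    fix y assume minimal: "\<forall>q. is_prefix Q q (subpath Q p x z) \<and> q \<noteq> subpath Q p x z \<longrightarrow> \<not> inI Q R q"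
      and y: "x < y \<and> y \<le> z"
    have "is_prefix Q (subpath Q p y z) (subpath Q p x z)"
      using is_prefix_subpath_iff[OF xz, of "subpath Q p y z"] y less_imp_le by blast
    then have "\<not> inI Q R (subpath Q p y z)"
      using minimal[rule_format, of "subpath Q p y z"] proper[of y] y by blast
    then show "\<not> relation_between Q R p y z" using inI_subpath_iff[of y z] xz y by simp
  next
    fix q assume "\<forall>y. x < y \<and> y \<le> z \<longrightarrow> \<not> relation_between Q R p y z"
      and q: "is_prefix Q q (subpath Q p x z) \<and> q \<noteq> subpath Q p x z"
    then obtain y where "x < y" "y \<le> z" "q = subpath Q p y z"
      using is_prefix_subpath_iff[OF xz] le_neq_implies_less by metis
    then show "\<not> inI Q R q" using inI_subpath_iff[of y z] xz \<open>\<forall>y. _\<close> by simp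
  qed
  then show ?thesis using inI_subpath_iff[OF xz] by simp
qed

lemma left_decomp_iff_left_chain:
  assumes mono: "\<forall>k<l. E k \<le> E (Suc k)" and "E l \<le> L" and "1 \<le> l"
  shows "left_decomp Q R (int l - 2) (subpath Q p (E 0) (E l)) (left_pieces E l)
    \<longleftrightarrow> left_chain (relation_between Q R p) l E"
proof -
  let ?us = "left_pieces E l"
  have le: "E i \<le> E j" if "i \<le> j" "j \<le> l" for i j using mono_upto[OF mono that] .
  have bnd: "E k \<le> L" if "k \<le> l" for k using le[OF that order_refl] assms(2) by simp
  have prod: "composable Q ?us" "pprod ?us = subpath Q p (E 0) (E l)"
    using composable_left_pieces[OF assms] pprod_left_pieces[OF assms] by auto
  have first: "plen (?us ! 0) = 0 \<longleftrightarrow> E 1 = E 0"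
    using plen_subpath[of "E 0" "E 1"] le[of 0 1] bnd[of 1] \<open>1 \<le> l\<close> by auto
  have second: "plen (?us ! 1) = 1 \<longleftrightarrow> E 2 = Suc (E 1)" if "2 \<le> l"
    using plen_subpath[of "E 1" "E 2"] le[of 1 2] bnd[of 2] that by (auto simp: numeral_2_eq_2)
  have basis: "(\<forall>x\<in>set ?us. x \<in> Bset Q R) \<longleftrightarrow> (\<forall>k<l. \<not> relation_between Q R p (E k) (E (Suc k)))"
    using subpath_in_Bset_iff le bnd by auto
  have pair: "pcat (?us ! k) (?us ! Suc k) = subpath Q p (E k) (E (k + 2))"
    and "E k \<le> E (k + 2)" "E (k + 2) \<le> L" if "Suc k < l" for k
    using pcat_subpath[of "E k" "E (Suc k)" "E (Suc (Suc k))"] le bnd that by auto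
  then have pairs: "(\<forall>k. 1 \<le> k \<and> Suc k < length ?us \<longrightarrow>
          inI Q R (pcat (?us ! k) (?us ! Suc k))
          \<and> (\<forall>q. is_suffix Q q (pcat (?us ! k) (?us ! Suc k))
                 \<and> q \<noteq> pcat (?us ! k) (?us ! Suc k) \<longrightarrow> \<not> inI Q R q))
    \<longleftrightarrow> (\<forall>k. 1 \<le> k \<and> Suc k < l \<longrightarrow> relation_between Q R p (E k) (E (k + 2))
          \<and> (\<forall>y. E k \<le> y \<and> y < E (k + 2) \<longrightarrow> \<not> relation_between Q R p (E k) y))"
    using minimal_suffix_in_ideal_iff by simp
  show ?thesis
    unfolding left_decomp_def left_chain_def
    using prod first second basis pairs mono \<open>1 \<le> l\<close> by auto
qed

lemma right_decomp_iff_right_chain: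
  assumes anti: "\<forall>k<l. F (Suc k) \<le> F k" and "F 0 \<le> L" and "1 \<le> l"
  shows "right_decomp Q R (int l - 2) (subpath Q p (F l) (F 0)) (right_pieces F l)
    \<longleftrightarrow> right_chain (relation_between Q R p) l F"
proof -
  let ?vs = "right_pieces F l"
  define E where "E j = F (l - j)" for j
  have le: "F j \<le> F i" if "i \<le> j" "j \<le> l" for i j
    using mono_upto[of l "\<lambda>k. - int (F k)" i j] anti that by simp
  have bnd: "F k \<le> L" if "k \<le> l" for k using le[of 0 k] that assms(2) by simp
  have E_mono: "\<forall>k<l. E k \<le> E (Suc k)" unfolding E_def using le by simp
  have "rev ?vs = left_pieces E l"
  proof (rule nth_equalityI)
    fix j assume "j < length (rev ?vs)"
    then show "rev ?vs ! j = left_pieces E l ! j"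
      unfolding E_def by (simp add: rev_nth Suc_diff_Suc)
  qed simp
  then have prod: "composable Q (rev ?vs)" "pprod (rev ?vs) = subpath Q p (F l) (F 0)"
    using composable_left_pieces[OF E_mono _ \<open>1 \<le> l\<close>]
      pprod_left_pieces[OF E_mono _ \<open>1 \<le> l\<close>] assms(2)
    unfolding E_def by auto
  have first: "plen (?vs ! 0) = 0 \<longleftrightarrow> F 1 = F 0"
    using plen_subpath[of "F 1" "F 0"] le[of 0 1] bnd[of 0] \<open>1 \<le> l\<close> by auto
  have second: "plen (?vs ! 1) = 1 \<longleftrightarrow> Suc (F 2) = F 1" if "2 \<le> l"
    using plen_subpath[of "F 2" "F 1"] le[of 1 2] bnd[of 1] that by (auto simp: numeral_2_eq_2)
  have basis: "(\<forall>x\<in>set ?vs. x \<in> Bset Q R) \<longleftrightarrow> (\<forall>k<l. \<not> relation_between Q R p (F (Suc k)) (F k))"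
    using subpath_in_Bset_iff le bnd by auto
  have pair: "pcat (?vs ! Suc k) (?vs ! k) = subpath Q p (F (k + 2)) (F k)"
    and "F (k + 2) \<le> F k" "F k \<le> L" if "Suc k < l" for k
    using pcat_subpath[of "F (Suc (Suc k))" "F (Suc k)" "F k"] le bnd that by auto
  then have pairs: "(\<forall>k. 1 \<le> k \<and> Suc k < length ?vs \<longrightarrow>
          inI Q R (pcat (?vs ! Suc k) (?vs ! k))
          \<and> (\<forall>q. is_prefix Q q (pcat (?vs ! Suc k) (?vs ! k))
                 \<and> q \<noteq> pcat (?vs ! Suc k) (?vs ! k) \<longrightarrow> \<not> inI Q R q))
    \<longleftrightarrow> (\<forall>k. 1 \<le> k \<and> Suc k < l \<longrightarrow> relation_between Q R p (F (k + 2)) (F k)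
          \<and> (\<forall>x. F (k + 2) < x \<and> x \<le> F k \<longrightarrow> \<not> relation_between Q R p x (F k)))"
    using minimal_prefix_in_ideal_iff by simp
  show ?thesis
    unfolding right_decomp_def right_chain_def
    using prod first second basis pairs anti \<open>1 \<le> l\<close> by auto
qed

lemma left_decomp_subpath_left_chain:
  assumes ld: "left_decomp Q R n (subpath Q p a b) us" and ab: "a \<le> b" "b \<le> L"
  obtains E where "left_chain (relation_between Q R p) (length us) E"
    "E 0 = a" "E (length us) = b" "us = left_pieces E (length us)"
proof -
  let ?l = "length us"
  have "composable Q us" "pprod us = subpath Q p a b" "n = int ?l - 2"
    using ld unfolding left_decomp_def by auto
  then obtain E where E: "E 0 = a" "E ?l = b" "\<forall>k<?l. E k \<le> E (Suc k)"
    and us: "us = left_pieces E ?l"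
    using pprod_eq_subpath_left_pieces ab by blast
  have "1 \<le> ?l" using \<open>composable Q us\<close> unfolding composable_def by (cases us) auto
  then have "left_chain (relation_between Q R p) ?l E"
    using left_decomp_iff_left_chain[OF E(3)] ld E(1,2) ab us \<open>n = int ?l - 2\<close> by simp
  then show thesis using that E(1,2) us by blast
qed

lemma right_decomp_subpath_right_chain:
  assumes rd: "right_decomp Q R n (subpath Q p a b) vs" and ab: "a \<le> b" "b \<le> L"
  obtains F where "right_chain (relation_between Q R p) (length vs) F"
    "F 0 = b" "F (length vs) = a" "vs = right_pieces F (length vs)"
proof -
  let ?l = "length vs"
  have "composable Q (rev vs)" "pprod (rev vs) = subpath Q p a b" "n = int ?l - 2"
    using rd unfolding right_decomp_def by auto
  then obtain E where E: "E 0 = a" "E ?l = b" "\<forall>k<?l. E k \<le> E (Suc k)"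
    "rev vs = left_pieces E ?l"
    using pprod_eq_subpath_left_pieces[of "rev vs" a b] ab by auto
  define F where "F k = E (?l - k)" for k
  have anti: "\<forall>k<?l. F (Suc k) \<le> F k"
  proof (intro allI impI)
    fix k assume "k < ?l"
    then show "F (Suc k) \<le> F k" using E(3)[rule_format, of "?l - Suc k"] unfolding F_def
      by (simp add: Suc_diff_Suc)
  qed
  have vs: "vs = right_pieces F ?l"
  proof (rule nth_equalityI)
    fix k assume k: "k < length vs"
    have "vs ! k = rev vs ! (?l - Suc k)" using k by (simp add: rev_nth)
    then show "vs ! k = right_pieces F ?l ! k"
      unfolding E(4) using k unfolding F_def by (simp add: Suc_diff_Suc)
  qed simp
  have "1 \<le> ?l" using \<open>composable Q (rev vs)\<close> unfolding composable_def by (cases vs) auto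
  then have "right_chain (relation_between Q R p) ?l F"
    using right_decomp_iff_right_chain[OF anti] rd E(1,2) ab vs \<open>n = int ?l - 2\<close>
    unfolding F_def by simp
  then show thesis using that E(1,2) vs unfolding F_def by simp
qed

end

section \<open>Occurrences of ambiguities in an ambiguity\<close>

locale ambiguity_setting = quiver_path Q p
  for Q :: "('v, 'a, 'b) quiver_scheme" and p :: "('a, 'v) qpath" +
  fixes R :: "('a, 'v) qpath set"
  assumes relations_long: "\<forall>r\<in>R. 2 \<le> plen r"
begin

abbreviation rel :: "nat \<Rightarrow> nat \<Rightarrow> bool" where
  "rel \<equiv> relation_between Q R p"

sublocale interval_relation rel
  using interval_relation_between[OF relations_long] .

lemma left_chain_Gamma:
  assumes "left_chain rel l E" "1 \<le> l" "E l \<le> L"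
  shows "subpath Q p (E 0) (E l) \<in> Gamma Q R (int l - 2)"
  using left_decomp_iff_left_chain[of l E] assms unfolding Gamma_def left_chain_def by blast

lemma right_chain_Gamma:
  assumes F: "right_chain rel l F" and "1 \<le> l" "F 0 \<le> L"
  shows "subpath Q p (F l) (F 0) \<in> Gamma Q R (int l - 2)"
proof -
  obtain E where "left_chain rel l E" "E 0 = F l" "E l = F 0"
    using right_chain_to_left_chain[OF F \<open>1 \<le> l\<close>] .
  then show ?thesis using left_chain_Gamma[of l E] assms by simp
qed

lemma occurrence_left_chain:
  assumes "q \<in> Gamma Q R n" "occ_at Q q i p"
  obtains G l where "left_chain rel l G" "int l = n + 2" "G 0 = i" "G l = i + plen q"
    "q = subpath Q p i (i + plen q)"
proof -
  obtain us where us: "left_decomp Q R n q us" using assms(1) unfolding Gamma_def by blast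
  have q: "i + plen q \<le> L" "q = subpath Q p i (i + plen q)"
    using assms(2) occ_at_iff_subpath by auto
  moreover have "left_decomp Q R n (subpath Q p i (i + plen q)) us"
    using us by (simp only: q(2)[symmetric])
  ultimately obtain G where "left_chain rel (length us) G" "G 0 = i" "G (length us) = i + plen q"
    using left_decomp_subpath_left_chain[of R n i "i + plen q" us] by auto
  moreover have "int (length us) = n + 2" using us unfolding left_decomp_def by simp
  ultimately show thesis using that q(2) by blast
qed

lemma ambiguity_left_chain:
  assumes "left_decomp Q R n p us"
  obtains E where "left_chain rel (length us) E" "E 0 = 0" "E (length us) = L"
    "us = left_pieces E (length us)"
  using left_decomp_subpath_left_chain[of R n 0 L us] assms subpath_whole by auto

lemma ambiguity_right_chain:
  assumes "right_decomp Q R n p vs"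
  obtains F where "right_chain rel (length vs) F" "F 0 = L" "F (length vs) = 0"
    "vs = right_pieces F (length vs)"
  using right_decomp_subpath_right_chain[of R n 0 L vs] assms subpath_whole by auto

lemma the_left_decomp:
  assumes "left_decomp Q R n p us"
  shows "(THE us. left_decomp Q R n p us) = us"
proof (rule the_equality)
  fix us' assume us': "left_decomp Q R n p us'"
  have len: "length us' = length us" using assms us' unfolding left_decomp_def by simp
  obtain E where E: "left_chain rel (length us) E" "E 0 = 0" "E (length us) = L"
    "us = left_pieces E (length us)"
    by (rule ambiguity_left_chain[OF assms])
  obtain E' where E': "left_chain rel (length us) E'" "E' 0 = 0" "E' (length us) = L"
    "us' = left_pieces E' (length us)"
    by (rule ambiguity_left_chain[OF us', unfolded len])
  have "E' k = E k" if "k \<le> length us" for k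
    using left_chain_unique[OF E'(1) E(1)] E'(2) E(2) that by simp
  then have "left_pieces E' (length us) = left_pieces E (length us)" by (intro map_cong) auto
  then show "us' = us" using E(4) E'(4) by simp
qed (rule assms)

lemma the_right_decomp:
  assumes "right_decomp Q R n p vs"
  shows "(THE vs. right_decomp Q R n p vs) = vs"
proof (rule the_equality)
  fix vs' assume vs': "right_decomp Q R n p vs'"
  have len: "length vs' = length vs" and "1 \<le> length vs"
    using assms vs' unfolding right_decomp_def by auto
  obtain F where F: "right_chain rel (length vs) F" "F 0 = L" "F (length vs) = 0"
    "vs = right_pieces F (length vs)"
    by (rule ambiguity_right_chain[OF assms])
  obtain F' where F': "right_chain rel (length vs) F'" "F' 0 = L" "F' (length vs) = 0"
    "vs' = right_pieces F' (length vs)"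
    by (rule ambiguity_right_chain[OF vs', unfolded len])
  have "F' k = F k" if "k \<le> length vs" for k
    using right_chain_unique[OF F'(1) F(1)] F'(2) F(2) \<open>1 \<le> length vs\<close> that by simp
  then have "right_pieces F' (length vs) = right_pieces F (length vs)" by (intro map_cong) auto
  then show "vs' = vs" using F(4) F'(4) by simp
qed (rule assms)

lemma sigma_eq_subpath:
  assumes "left_decomp Q R n p (left_pieces E l)" "left_chain rel l E" "E l = L"
    and "1 \<le> k" "k \<le> l"
  shows "sigma Q R n (int k - 2) p = subpath Q p (E 0) (E k)"
proof -
  have E: "left_chain rel k E" using left_chain_truncate[OF assms(2,5)] .
  have "E k \<le> L" using left_chain_mono[OF assms(2), of k l] assms(3,5) by simp
  then have "left_decomp Q R (int k - 2) (subpath Q p (E 0) (E k)) (left_pieces E k)"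
    using left_decomp_iff_left_chain[of k E] E left_chainD(1)[OF E] assms(4) by blast
  then have "pprod (left_pieces E k) = subpath Q p (E 0) (E k)"
    unfolding left_decomp_def by simp
  moreover have "take k (left_pieces E l) = left_pieces E k" using assms(5) by (simp add: take_map)
  ultimately show ?thesis
    unfolding sigma_def the_left_decomp[OF assms(1)] using assms(4) by simp
qed

lemma pi_eq_subpath:
  assumes "right_decomp Q R n p (right_pieces F l)" "right_chain rel l F" "F 0 = L"
    and "1 \<le> k" "k \<le> l"
  shows "pi Q R n (int k - 2) p = subpath Q p (F k) (F 0)"
proof -
  have F: "right_chain rel k F" using right_chain_truncate[OF assms(2,5)] .
  then have "right_decomp Q R (int k - 2) (subpath Q p (F k) (F 0)) (right_pieces F k)"
    using right_decomp_iff_right_chain[of k F] F right_chainD(1)[OF F] assms(3,4) by simp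
  then have "pprod (rev (right_pieces F k)) = subpath Q p (F k) (F 0)"
    unfolding right_decomp_def by simp
  moreover have "take k (right_pieces F l) = right_pieces F k"
    using assms(5) by (simp add: take_map)
  ultimately show ?thesis
    unfolding pi_def the_right_decomp[OF assms(1)] using assms(4) by simp
qed

lemma pi_eq_greedy_right_chain:
  assumes us: "left_decomp Q R n p (left_pieces E l)" and E: "left_chain rel l E"
    and "E 0 = 0" "E l = L" "1 \<le> k" "k \<le> l"
  shows "pi Q R n (int k - 2) p = subpath Q p (greedy_right_chain rel L k) L"
proof -
  let ?F = "greedy_right_chain rel L"
  have F: "right_chain rel l ?F" "?F l = 0"
    using left_chain_to_right_chain[OF E] assms(3-6) by auto
  have "n = int l - 2" using us unfolding left_decomp_def by simp
  then have "right_decomp Q R n p (right_pieces ?F l)"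
    using right_decomp_iff_right_chain[of l ?F] F right_chainD(1)[OF F(1)] assms(5,6)
      subpath_whole
    by simp
  then show ?thesis using pi_eq_subpath[OF _ F(1)] assms(5,6) by simp
qed

lemma ends_in_Sub:
  assumes E: "left_chain rel (2 * m + 2) E" and "E 0 = 0" "E (2 * m + 2) = L"
  defines "s \<equiv> greedy_right_chain rel L (2 * m + 1)"
  shows "{(subpath Q p 0 (E (2 * m + 1)), 0), (subpath Q p s L, s)} \<subseteq> Sub Q R (int (2 * m)) p"
proof -
  have F: "right_chain rel (2 * m + 2) (greedy_right_chain rel L)"
    using left_chain_to_right_chain[OF E] assms(3) by simp
  have "E (2 * m + 1) \<le> L"
    using left_chain_mono[OF E, of "2 * m + 1" "2 * m + 2"] assms(3) by simp
  moreover from this have "subpath Q p 0 (E (2 * m + 1)) \<in> Gamma Q R (int (2 * m) - 1)"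
    using left_chain_Gamma[OF left_chain_truncate[OF E], of "2 * m + 1"] assms(2) by simp
  moreover have "s \<le> L" using right_chain_antimono[OF F, of 0 "2 * m + 1"] unfolding s_def by simp
  moreover have "subpath Q p s L \<in> Gamma Q R (int (2 * m) - 1)"
    using right_chain_Gamma[OF right_chain_truncate[OF F], of "2 * m + 1"] unfolding s_def by simp
  ultimately show ?thesis unfolding Sub_def using occ_at_subpath by simp
qed

lemma Sub_subset_ends:
  assumes E: "left_chain rel (2 * m + 2) E" and "E 0 = 0" "E (2 * m + 2) = L"
  defines "s \<equiv> greedy_right_chain rel L (2 * m + 1)"
  shows "Sub Q R (int (2 * m)) p \<subseteq> {(subpath Q p 0 (E (2 * m + 1)), 0), (subpath Q p s L, s)}"
proof
  fix x assume "x \<in> Sub Q R (int (2 * m)) p"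
  then obtain q i where x: "x = (q, i)"
    and q: "q \<in> Gamma Q R (int (2 * m) - 1)" "occ_at Q q i p"
    unfolding Sub_def by auto
  from q obtain G l where G: "left_chain rel l G" "int l = int (2 * m) - 1 + 2" "G 0 = i"
    "G l = i + plen q" "q = subpath Q p i (i + plen q)"
    by (rule occurrence_left_chain)
  have "l = 2 * m + 1" using G(2) by simp
  then have G': "left_chain rel (2 * m + 1) G" "G (2 * m + 1) = i + plen q" using G(1,4) by auto
  have "i + plen q \<le> L" using \<open>occ_at Q q i p\<close> unfolding occ_at_def plen_def by simp
  show "x \<in> {(subpath Q p 0 (E (2 * m + 1)), 0), (subpath Q p s L, s)}"
  proof (cases "i = 0")
    case True
    then show ?thesis
      using left_chain_unique[OF G'(1) E, of "2 * m + 1"] G(3,5) G'(2) assms(2) x by simp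
  next
    case False
    then have "L \<le> i + plen q"
      using shifted_left_chain_overtakes[OF E G'(1)] assms(2,3) G(3) G'(2) by simp
    then have "i + plen q = L" using \<open>i + plen q \<le> L\<close> by simp
    then have "s = i"
      using left_chain_to_right_chain(2)[OF G'(1)] G(3) G'(2) unfolding s_def by simp
    then show ?thesis using G(5) \<open>i + plen q = L\<close> x by simp
  qed
qed

lemma Sub_of_even_ambiguity:
  assumes "left_decomp Q R (int (2 * m)) p us"
  defines "\<sigma> \<equiv> sigma Q R (int (2 * m)) (int (2 * m) - 1) p"
    and "\<pi> \<equiv> pi Q R (int (2 * m)) (int (2 * m) - 1) p"
  shows "Sub Q R (int (2 * m)) p = {(\<sigma>, 0), (\<pi>, plen p - plen \<pi>)} \<and> (\<sigma>, 0) \<noteq> (\<pi>, plen p - plen \<pi>)"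
proof -
  have "length us = 2 * m + 2" using assms(1) unfolding left_decomp_def by simp
  then obtain E where E: "left_chain rel (2 * m + 2) E" "E 0 = 0" "E (2 * m + 2) = L"
    and us: "us = left_pieces E (2 * m + 2)"
    using ambiguity_left_chain[OF assms(1)] by auto
  define s where "s = greedy_right_chain rel L (2 * m + 1)"
  have n_1: "int (2 * m) - 1 = int (2 * m + 1) - 2" by simp
  have \<sigma>: "\<sigma> = subpath Q p 0 (E (2 * m + 1))"
    using sigma_eq_subpath[OF assms(1)[unfolded us] E(1) E(3), of "2 * m + 1"] E(2)
    unfolding \<sigma>_def n_1 by simp
  have \<pi>: "\<pi> = subpath Q p s L"
    using pi_eq_greedy_right_chain[OF assms(1)[unfolded us] E, of "2 * m + 1"]
    unfolding \<pi>_def n_1 s_def by simp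
  have "s \<le> L"
    using right_chain_antimono[OF left_chain_to_right_chain(1)[OF E(1)], of 0 "2 * m + 1"] E(3)
    unfolding s_def by simp
  then have offset: "plen p - plen (subpath Q p s L) = s" using plen_subpath[of s L] plen_p by simp
  have "plen (subpath Q p 0 (E (2 * m + 1))) < plen (subpath Q p 0 L)"
    using left_chain_strict[OF E(1), of "2 * m + 1"] E(3) plen_subpath[of 0 "E (2 * m + 1)"]
      plen_subpath[of 0 L] by simp
  then have "(subpath Q p 0 (E (2 * m + 1)), 0) \<noteq> (subpath Q p s L, s)"
    by (metis order_less_irrefl prod.inject)
  then show ?thesis
    using ends_in_Sub[OF E] Sub_subset_ends[OF E] offset unfolding \<sigma> \<pi> s_def by auto
qed

end

theorem mainTheorem4:
  fixes Q :: "('v, 'a) quiver" and R :: "('a, 'v) qpath set" and n :: int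
    and p :: "('a, 'v) qpath"
  assumes "monomial_setting Q R"
    and "n \<ge> 0" and "even n"
    and "p \<in> Gamma Q R n"
  shows "Sub Q R n p =
           {(sigma Q R n (n - 1) p, 0),
            (pi Q R n (n - 1) p, plen p - plen (pi Q R n (n - 1) p))}
         \<and> (sigma Q R n (n - 1) p, 0::nat)
             \<noteq> (pi Q R n (n - 1) p, plen p - plen (pi Q R n (n - 1) p))"
proof -
  obtain us where us: "left_decomp Q R n p us" using assms(4) unfolding Gamma_def by blast
  then have "composable Q us" "p = pprod us" unfolding left_decomp_def by simp_all
  then have "is_path Q p" using pprod_is_path[OF \<open>composable Q us\<close>] by simp
  then interpret ambiguity_setting Q p R
    using assms(1) unfolding monomial_setting_def by unfold_locales auto
  obtain k where "n = 2 * k" using \<open>even n\<close> by (rule evenE)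
  then have n: "n = int (2 * nat k)" using \<open>n \<ge> 0\<close> by simp
  show ?thesis using Sub_of_even_ambiguity[OF us[unfolded n]] unfolding n .
qed

end
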